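(* Assume (h) and (R-q) with $q=4$, and fix $h\in(0,h_0]$. (i) Let $p\ge4$ and let $(R_t)_{t\in\pi_h}$ be an $(\mathcal F_t)$-adapted sequence in $L^p$ with $\sup_{t\in\pi_h}\|1_{\{t\le\tau_h\}}R_t\|_{L^p}<\infty$. Then the sequence $(1_{\{t\le\tau_h\}}R_t)_{t\in\pi_h}$ belongs to $\mathcal V(\tau_h)$ and has finite norm $\|\cdot\|_{\tau_h}$. (ii) Every $S\in\mathcal V(\tau_h)$ with $\|S\|_{\tau_h}<\infty$ satisfies $\big(\frac1{1-3L_fh}\big)^{t/h}1_{\{t\le\tau_h\}}S_t^2\to0$ in $L^1$ as $t\to\infty$, $t\in\pi_h$.
   Context: $(\Omega,\mathcal F,(\mathcal F_t)_{t\ge0},\mathbb P)$ is a filtered probability space whose filtration is generated by a $d$-dimensional Brownian motion, augmented by null sets. $\tau$ is a stopping time and $L_f>0$ a constant. For $h>0$, $\pi_h=\{nh:n\in\mathbb N_0\}$, and for each $h\in(0,h_0]$ a finite $\pi_h$-valued stopping time $\tau_h$ is given. $\mathcal V(\tau_h)$ is the set of sequences $(R_t)_{t\in\pi_h}$ with $R_t\in L^2(\mathcal F_t)$ and $1_{\{t>\tau_h\}}R_t=0$ for all $t\in\pi_h$, with $\|R\|_{\tau_h}=\sum_{t\in\pi_h}\varphi(t)\|1_{\{t\le\tau_h\}}R_t\|_{L^2}$, $\varphi(t)=(1-3L_fh)^{-t/h}$. Assumptions: (h) $h_0<\min\{L_f,\frac1{12L_f}\}$ and $h\in(0,h_0]$.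 (R-q) for a parameter $q\ge2$: there is $\rho>4qL_f$ with $\exp(\rho\tau)\in L^1$ and $\sup_{h\in(0,h_0]}\exp(\rho\tau_h)\in L^1$. *)

theory Defs
  imports "HOL-Probability.Probability"
begin

definition brownian_motion :: "'a measure \<Rightarrow> (real \<Rightarrow> 'a \<Rightarrow> real ^ 'd::finite) \<Rightarrow> bool" where
  "brownian_motion M W \<longleftrightarrow>
     prob_space M
   \<and> (\<forall>t\<ge>0. W t \<in> borel_measurable M)
   \<and> (AE \<omega> in M. W 0 \<omega> = 0 \<and> continuous_on {0..} (\<lambda>t. W t \<omega>))
   \<and> (\<forall>s t. 0 \<le> s \<longrightarrow> s < t \<longrightarrow>
          prob_space.indep_vars M (\<lambda>_. borel) (\<lambda>i \<omega>. (W t \<omega> - W s \<omega>) $ i) UNIV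
        \<and> (\<forall>i. distributed M lborel (\<lambda>\<omega>. (W t \<omega> - W s \<omega>) $ i) (normal_density 0 (sqrt (t - s)))))
   \<and> (\<forall>(ts :: nat \<Rightarrow> real) n. 0 \<le> ts 0 \<longrightarrow> strict_mono ts \<longrightarrow>
          prob_space.indep_vars M (\<lambda>_. borel) (\<lambda>k \<omega>. W (ts (Suc k)) \<omega> - W (ts k) \<omega>) {..<n})"

definition brownian_filtration :: "'a measure \<Rightarrow> (real \<Rightarrow> 'a \<Rightarrow> real ^ 'd::finite) \<Rightarrow> real \<Rightarrow> 'a measure" where
  "brownian_filtration M W t = sigma (space M)
     ({W s -` B \<inter> space M | s B. 0 \<le> s \<and> s \<le> t \<and> B \<in> sets borel} \<union> null_sets M)"

definition grid :: "real \<Rightarrow> real set" where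
  "grid h = range (\<lambda>n::nat. real n * h)"

definition phi :: "real \<Rightarrow> real \<Rightarrow> real \<Rightarrow> real" where
  "phi Lf h t = (1 - 3 * Lf * h) powr (- t / h)"

definition Lp_norm :: "'a measure \<Rightarrow> real \<Rightarrow> ('a \<Rightarrow> real) \<Rightarrow> real" where
  "Lp_norm M p X = (\<integral>\<omega>. \<bar>X \<omega>\<bar> powr p \<partial>M) powr (1 / p)"

definition in_V :: "'a measure \<Rightarrow> (real \<Rightarrow> 'a measure) \<Rightarrow> real \<Rightarrow> ('a \<Rightarrow> real)
                     \<Rightarrow> (real \<Rightarrow> 'a \<Rightarrow> real) \<Rightarrow> bool" where
  "in_V M F h T R \<longleftrightarrow> (\<forall>t\<in>grid h.
      R t \<in> borel_measurable (F t)
    \<and> integrable M (\<lambda>\<omega>. (R t \<omega>)\<^sup>2)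
    \<and> (AE \<omega> in M. indicator {\<omega>. t > T \<omega>} \<omega> * R t \<omega> = 0))"

definition V_norm :: "'a measure \<Rightarrow> real \<Rightarrow> real \<Rightarrow> ('a \<Rightarrow> real) \<Rightarrow> (real \<Rightarrow> 'a \<Rightarrow> real) \<Rightarrow> ennreal" where
  "V_norm M Lf h T R = (\<Sum>n. ennreal (phi Lf h (real n * h) *
      Lp_norm M 2 (\<lambda>\<omega>. indicator {\<omega>. real n * h \<le> T \<omega>} \<omega> * R (real n * h) \<omega>)))"

end

theory Submission
  imports Defs
begin

(* On the event {t <= tau_h}, splitting R^2 at the level a = exp (rho t / 2) gives
     R^2 <= a + |R|^p / a <= exp (- rho t / 2) (exp (rho tau_h) + |R|^p),
   so the exponential moment of tau_h and the uniform L^p bound yield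
   E [1_{t <= tau_h} R_t^2] = O (exp (- rho t / 2)). The weights are phi (n h) = c^n with
   c = 1 / (1 - 3 L_f h) <= exp (4 L_f h), and rho > 16 L_f makes the series defining the norm
   dominated by a geometric one. Conversely, a finite norm forces its terms
   c^n ||1_{nh <= tau_h} S_nh||_2 to tend to 0, and since c >= 1 their squares dominate
   c^n E [1_{nh <= tau_h} S_nh^2]. *)

lemma space_brownian_filtration: "space (brownian_filtration M W t) = space M"
  unfolding brownian_filtration_def
  by (rule space_measure_of_conv)

lemma sets_brownian_filtration:
  "sets (brownian_filtration M W t) = sigma_sets (space M)
     ({W s -` B \<inter> space M | s B. 0 \<le> s \<and> s \<le> t \<and> B \<in> sets borel} \<union> null_sets M)"
  unfolding brownian_filtration_def
  by (rule sets_measure_of) (auto dest: null_setsD2 sets.sets_into_space)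

lemma filtration_brownian_filtration: "filtration (space M) (brownian_filtration M W)"
proof
  show "sets (brownian_filtration M W s) \<subseteq> sets (brownian_filtration M W t)" if "s \<le> t" for s t
    unfolding sets_brownian_filtration using that by (intro sigma_sets_mono') fastforce
qed (rule space_brownian_filtration)

lemma subalgebra_brownian_filtration:
  assumes "\<And>s. 0 \<le> s \<Longrightarrow> W s \<in> borel_measurable M"
  shows "subalgebra M (brownian_filtration M W t)"
  unfolding subalgebra_def space_brownian_filtration sets_brownian_filtration
  using assms by (auto intro!: sets.sigma_sets_subset)

lemma (in filtration) pred_le_stopping_time:
  "stopping_time F T \<Longrightarrow> Measurable.pred (F t) (\<lambda>\<omega>. t \<le> T \<omega>)"
  unfolding not_less[symmetric] by (intro pred_intros_logic stopping_time_less_const)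

lemma power2_le_add_powr_divide:
  fixes x p a :: real
  assumes "4 \<le> p" "1 \<le> a"
  shows "x\<^sup>2 \<le> a + \<bar>x\<bar> powr p / a"
proof (cases "x\<^sup>2 \<le> a")
  case False
  then have "1 \<le> \<bar>x\<bar>"
    using assms abs_square_le_1[of x] by linarith
  have "x\<^sup>2 * a \<le> x\<^sup>2 * x\<^sup>2"
    using False by (intro mult_left_mono) auto
  also have "\<dots> \<le> \<bar>x\<bar> powr p"
    using assms \<open>1 \<le> \<bar>x\<bar>\<close> powr_mono[of 4 p "\<bar>x\<bar>"] by (simp add: powr_numeral flip: power_add)
  finally have "x\<^sup>2 \<le> \<bar>x\<bar> powr p / a"
    using assms by (simp add: le_divide_eq)
  then show ?thesis
    using assms by linarith
qed (use assms in \<open>simp add: add_increasing2\<close>)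

lemma power2_le_exp_split:
  fixes y p \<rho> t s :: real
  assumes "4 \<le> p" "0 \<le> \<rho>" "0 \<le> t" "t \<le> s"
  shows "y\<^sup>2 \<le> exp (- \<rho> * t / 2) * (exp (\<rho> * s) + \<bar>y\<bar> powr p)"
proof -
  define a where "a = exp (\<rho> * t / 2)"
  have "1 \<le> a"
    unfolding a_def using assms by simp
  have "a \<le> exp (- \<rho> * t / 2) * exp (\<rho> * s)"
    unfolding a_def using assms mult_left_mono[of t s \<rho>] by (simp flip: exp_add)
  moreover have "\<bar>y\<bar> powr p / a = exp (- \<rho> * t / 2) * \<bar>y\<bar> powr p"
    unfolding a_def by (simp add: exp_minus field_simps)
  ultimately show ?thesis
    using power2_le_add_powr_divide[OF \<open>4 \<le> p\<close> \<open>1 \<le> a\<close>, of y] by (simp add: distrib_left)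
qed

lemma
  fixes X T :: "'a \<Rightarrow> real"
  assumes "4 \<le> p" "0 \<le> \<rho>" "0 \<le> t"
    and [measurable]: "X \<in> borel_measurable M" "T \<in> borel_measurable M"
    and exp_T: "integrable M (\<lambda>\<omega>. exp (\<rho> * T \<omega>))"
    and X_p: "integrable M (\<lambda>\<omega>. \<bar>X \<omega>\<bar> powr p)"
  shows integrable_truncated_square: "integrable M (\<lambda>\<omega>. (indicator {\<omega>. t \<le> T \<omega>} \<omega> * X \<omega>)\<^sup>2)"
    and integral_truncated_square_le: "(\<integral>\<omega>. (indicator {\<omega>. t \<le> T \<omega>} \<omega> * X \<omega>)\<^sup>2 \<partial>M)
      \<le> exp (- \<rho> * t / 2) * ((\<integral>\<omega>. exp (\<rho> * T \<omega>) \<partial>M)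
                              + (\<integral>\<omega>. \<bar>indicator {\<omega>. t \<le> T \<omega>} \<omega> * X \<omega>\<bar> powr p \<partial>M))"
proof -
  let ?Y = "\<lambda>\<omega>. indicator {\<omega>. t \<le> T \<omega>} \<omega> * X \<omega>"
  let ?B = "\<lambda>\<omega>. exp (- \<rho> * t / 2) * (exp (\<rho> * T \<omega>) + \<bar>?Y \<omega>\<bar> powr p)"
  have Y_p: "integrable M (\<lambda>\<omega>. \<bar>?Y \<omega>\<bar> powr p)"
    by (rule Bochner_Integration.integrable_bound[OF X_p]) (auto simp: indicator_def)
  have B: "integrable M ?B"
    using exp_T Y_p by simp
  have bound: "(?Y \<omega>)\<^sup>2 \<le> ?B \<omega>" for \<omega>
    using assms power2_le_exp_split[of p \<rho> t "T \<omega>" "?Y \<omega>"] by (cases "t \<le> T \<omega>") auto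
  show Y2: "integrable M (\<lambda>\<omega>. (?Y \<omega>)\<^sup>2)"
    by (rule Bochner_Integration.integrable_bound[OF B]) (use bound in \<open>auto intro: order_trans\<close>)
  have "(\<integral>\<omega>. (?Y \<omega>)\<^sup>2 \<partial>M) \<le> (\<integral>\<omega>. ?B \<omega> \<partial>M)"
    using Y2 B bound by (rule integral_mono)
  also have "\<dots> = exp (- \<rho> * t / 2) * ((\<integral>\<omega>. exp (\<rho> * T \<omega>) \<partial>M) + (\<integral>\<omega>. \<bar>?Y \<omega>\<bar> powr p \<partial>M))"
    using exp_T Y_p by simp
  finally show "(\<integral>\<omega>. (?Y \<omega>)\<^sup>2 \<partial>M)
      \<le> exp (- \<rho> * t / 2) * ((\<integral>\<omega>. exp (\<rho> * T \<omega>) \<partial>M) + (\<integral>\<omega>. \<bar>?Y \<omega>\<bar> powr p \<partial>M))" .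
qed

lemma Lp_norm_2: "Lp_norm M 2 X = sqrt (\<integral>\<omega>. (X \<omega>)\<^sup>2 \<partial>M)"
proof -
  have "\<bar>x\<bar> powr 2 = x\<^sup>2" for x :: real
    by (cases "x = 0") (simp_all add: powr_numeral)
  then show ?thesis
    by (simp add: Lp_norm_def powr_half_sqrt)
qed

lemma phi_grid:
  assumes "0 < h" "3 * Lf * h < 1"
  shows "phi Lf h (real n * h) = (1 / (1 - 3 * Lf * h)) ^ n"
  unfolding phi_def using assms
  by (simp add: powr_minus powr_realpow power_one_over inverse_eq_divide)

lemma V_norm_eq_suminf:
  assumes "0 < h" "3 * Lf * h < 1"
  shows "V_norm M Lf h T R = (\<Sum>n. ennreal ((1 / (1 - 3 * Lf * h)) ^ n
           * sqrt (\<integral>\<omega>. (indicator {\<omega>. real n * h \<le> T \<omega>} \<omega> * R (real n * h) \<omega>)\<^sup>2 \<partial>M)))"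
  unfolding V_norm_def phi_grid[OF assms] Lp_norm_2 ..

lemma one_div_one_minus_three_le_exp:
  fixes x :: real
  assumes "0 \<le> x" "12 * x \<le> 1"
  shows "1 / (1 - 3 * x) \<le> exp (4 * x)"
proof -
  have "(1 + 4 * x) * (1 - 3 * x) = 1 + x * (1 - 12 * x)"
    by (simp add: algebra_simps)
  moreover have "0 \<le> x * (1 - 12 * x)"
    using assms by simp
  ultimately have "1 / (1 - 3 * x) \<le> 1 + 4 * x"
    using assms by (simp add: divide_le_eq)
  also have "\<dots> \<le> exp (4 * x)"
    by (rule exp_ge_add_one_self)
  finally show ?thesis .
qed

lemma summable_weighted_sqrt_geometric:
  fixes c q K :: real and I :: "nat \<Rightarrow> real"
  assumes "\<And>n. 0 \<le> I n" "\<And>n. I n \<le> K * q ^ n" "0 \<le> c" "0 \<le> q" "c * sqrt q < 1"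
  shows "summable (\<lambda>n. c ^ n * sqrt (I n))"
proof (rule summable_comparison_test')
  show "summable (\<lambda>n. sqrt K * (c * sqrt q) ^ n)"
    using assms by (intro summable_mult summable_geometric) simp
  show "norm (c ^ n * sqrt (I n)) \<le> sqrt K * (c * sqrt q) ^ n" for n
  proof -
    have "sqrt (I n) \<le> sqrt K * sqrt q ^ n"
      using real_sqrt_le_mono[OF assms(2)[of n]] by (simp add: real_sqrt_mult real_sqrt_power)
    then have "c ^ n * sqrt (I n) \<le> c ^ n * (sqrt K * sqrt q ^ n)"
      using assms by (simp add: mult_left_mono)
    then show ?thesis
      using assms by (simp add: power_mult_distrib ac_simps)
  qed
qed

lemma weighted_tendsto_zero_if_summable_sqrt:
  fixes c :: real and I :: "nat \<Rightarrow> real"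
  assumes "1 \<le> c" "\<And>n. 0 \<le> I n" "summable (\<lambda>n. c ^ n * sqrt (I n))"
  shows "(\<lambda>n. c ^ n * I n) \<longlonglongrightarrow> 0"
proof (rule Lim_null_comparison)
  show "(\<lambda>n. (c ^ n * sqrt (I n))\<^sup>2) \<longlonglongrightarrow> 0"
    using tendsto_power[OF summable_LIMSEQ_zero[OF assms(3)], of 2] by simp
  have "c ^ n * I n \<le> (c ^ n * sqrt (I n))\<^sup>2" for n
  proof -
    have "c ^ n * I n \<le> c ^ n * (c ^ n * I n)"
      using assms mult_right_mono[OF one_le_power[of c n], of "I n"] by (simp add: mult_left_mono)
    also have "\<dots> = (c ^ n * sqrt (I n))\<^sup>2"
      using assms by (simp add: power_mult_distrib power2_eq_square)
    finally show ?thesis .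
  qed
  then show "\<forall>\<^sub>F n in sequentially. norm (c ^ n * I n) \<le> (c ^ n * sqrt (I n))\<^sup>2"
    using assms by simp
qed

lemma integral_abs_powr_le_of_Lp_norm_le:
  fixes X :: "'a \<Rightarrow> real"
  assumes "0 < p" "Lp_norm M p X \<le> C"
  shows "(\<integral>\<omega>. \<bar>X \<omega>\<bar> powr p \<partial>M) \<le> C powr p"
proof -
  have "0 \<le> (\<integral>\<omega>. \<bar>X \<omega>\<bar> powr p \<partial>M)"
    by simp
  then have "(\<integral>\<omega>. \<bar>X \<omega>\<bar> powr p \<partial>M) = Lp_norm M p X powr p"
    unfolding Lp_norm_def using assms by (simp add: powr_powr)
  also have "\<dots> \<le> C powr p"
    using assms by (intro powr_mono2) (auto simp: Lp_norm_def)
  finally show ?thesis .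
qed

lemma in_V_truncation:
  assumes "\<And>t. t \<in> grid h \<Longrightarrow> Measurable.pred (F t) (\<lambda>\<omega>. t \<le> T \<omega>)"
    and "\<And>t. t \<in> grid h \<Longrightarrow> R t \<in> borel_measurable (F t)"
    and "\<And>t. t \<in> grid h \<Longrightarrow> integrable M (\<lambda>\<omega>. (indicator {\<omega>. t \<le> T \<omega>} \<omega> * R t \<omega>)\<^sup>2)"
  shows "in_V M F h T (\<lambda>t \<omega>. indicator {\<omega>. t \<le> T \<omega>} \<omega> * R t \<omega>)"
  unfolding in_V_def
proof (intro ballI conjI)
  fix t assume t: "t \<in> grid h"
  have "(\<lambda>\<omega>. indicator {\<omega>. t \<le> T \<omega>} \<omega> * R t \<omega>) = (\<lambda>\<omega>. if t \<le> T \<omega> then R t \<omega> else 0)"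
    by (auto simp: indicator_def)
  also have "\<dots> \<in> borel_measurable (F t)"
    using assms(1,2)[OF t] by measurable
  finally show "(\<lambda>\<omega>. indicator {\<omega>. t \<le> T \<omega>} \<omega> * R t \<omega>) \<in> borel_measurable (F t)" .
qed (use assms in \<open>auto simp: indicator_def\<close>)

lemma V_norm_truncation_finite:
  fixes R :: "real \<Rightarrow> 'a \<Rightarrow> real" and T :: "'a \<Rightarrow> real"
  assumes p: "4 \<le> p" and h: "0 < h" "0 \<le> Lf" "12 * Lf * h \<le> 1" and \<rho>: "16 * Lf < \<rho>"
    and [measurable]: "T \<in> borel_measurable M" "\<And>n. R (real n * h) \<in> borel_measurable M"
    and exp_T: "integrable M (\<lambda>\<omega>. exp (\<rho> * T \<omega>))"
    and R_p: "\<And>n. integrable M (\<lambda>\<omega>. \<bar>R (real n * h) \<omega>\<bar> powr p)"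
    and bdd: "bdd_above ((\<lambda>t. Lp_norm M p (\<lambda>\<omega>. indicator {\<omega>. t \<le> T \<omega>} \<omega> * R t \<omega>)) ` grid h)"
  shows "V_norm M Lf h T (\<lambda>t \<omega>. indicator {\<omega>. t \<le> T \<omega>} \<omega> * R t \<omega>) < \<infinity>"
proof -
  define c where "c = 1 / (1 - 3 * Lf * h)"
  define Y where "Y n \<omega> = indicator {\<omega>. real n * h \<le> T \<omega>} \<omega> * R (real n * h) \<omega>" for n \<omega>
  define I where "I n = (\<integral>\<omega>. (Y n \<omega>)\<^sup>2 \<partial>M)" for n
  have "0 \<le> Lf * h" "0 \<le> \<rho>"
    using h \<rho> by simp_all
  obtain C where C: "\<And>n. (\<integral>\<omega>. \<bar>Y n \<omega>\<bar> powr p \<partial>M) \<le> C"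
  proof -
    obtain C0 where "\<And>t. t \<in> grid h \<Longrightarrow> Lp_norm M p (\<lambda>\<omega>. indicator {\<omega>. t \<le> T \<omega>} \<omega> * R t \<omega>) \<le> C0"
      using bdd unfolding bdd_above_def by auto
    then show thesis
      using p by (intro that[of "C0 powr p"] integral_abs_powr_le_of_Lp_norm_le)
        (auto simp: Y_def grid_def)
  qed
  define K where "K = (\<integral>\<omega>. exp (\<rho> * T \<omega>) \<partial>M) + C"
  have I_le: "I n \<le> K * exp (- \<rho> * h / 2) ^ n" for n
  proof -
    have "I n \<le> exp (- \<rho> * (real n * h) / 2) * ((\<integral>\<omega>. exp (\<rho> * T \<omega>) \<partial>M) + (\<integral>\<omega>. \<bar>Y n \<omega>\<bar> powr p \<partial>M))"
      unfolding I_def Y_def using h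
      by (intro integral_truncated_square_le[OF p \<open>0 \<le> \<rho>\<close> _ _ _ exp_T R_p]) simp_all
    also have "\<dots> \<le> exp (- \<rho> * (real n * h) / 2) * K"
      unfolding K_def using C[of n] by simp
    finally show ?thesis
      by (simp add: ac_simps flip: exp_of_nat_mult)
  qed
  have "c \<le> exp (4 * (Lf * h))"
    unfolding c_def using one_div_one_minus_three_le_exp[of "Lf * h"] h by (simp add: ac_simps)
  also have "\<dots> < exp (\<rho> * h / 4)"
    using h \<rho> by simp
  finally have "c * exp (- (\<rho> * h / 4)) < exp (\<rho> * h / 4) * exp (- (\<rho> * h / 4))"
    by (intro mult_strict_right_mono) auto
  moreover have "sqrt (exp (- \<rho> * h / 2)) = exp (- (\<rho> * h / 4))"
    by (rule real_sqrt_unique) (simp_all flip: exp_add exp_of_nat_mult)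
  ultimately have "c * sqrt (exp (- \<rho> * h / 2)) < 1"
    by (simp flip: exp_add)
  then have "summable (\<lambda>n. c ^ n * sqrt (I n))"
    using h I_le by (intro summable_weighted_sqrt_geometric) (auto simp: I_def c_def)
  then have "(\<Sum>n. ennreal (c ^ n * sqrt (I n))) < \<infinity>"
    using h by (subst suminf_ennreal2) (auto simp: c_def I_def)
  moreover have "V_norm M Lf h T (\<lambda>t \<omega>. indicator {\<omega>. t \<le> T \<omega>} \<omega> * R t \<omega>)
      = (\<Sum>n. ennreal (c ^ n * sqrt (I n)))"
    using h by (simp add: V_norm_eq_suminf c_def I_def Y_def mult.assoc[symmetric] mult_indicator_subset)
  ultimately show ?thesis
    by simp
qed

lemma integrable_of_nn_integral_SUP_finite:
  fixes f :: "'i \<Rightarrow> 'a \<Rightarrow> real"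
  assumes "i \<in> I" "f i \<in> borel_measurable M" "\<And>\<omega>. 0 \<le> f i \<omega>"
    and "(\<integral>\<^sup>+\<omega>. (SUP j\<in>I. ennreal (f j \<omega>)) \<partial>M) < \<infinity>"
  shows "integrable M (f i)"
proof (rule integrableI_bounded)
  have "(\<integral>\<^sup>+\<omega>. ennreal (norm (f i \<omega>)) \<partial>M) \<le> (\<integral>\<^sup>+\<omega>. (SUP j\<in>I. ennreal (f j \<omega>)) \<partial>M)"
    using assms(1,3) by (intro nn_integral_mono) (auto intro: SUP_upper)
  then show "(\<integral>\<^sup>+\<omega>. ennreal (norm (f i \<omega>)) \<partial>M) < \<infinity>"
    using assms(4) by (simp add: order_le_less_trans)
qed (rule assms(2))

lemma truncation_in_V_and_V_norm_finite:
  fixes R :: "real \<Rightarrow> 'a \<Rightarrow> real" and T :: "'a \<Rightarrow> real"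
  assumes F: "filtration (space M) F" "\<And>t. subalgebra M (F t)" and T: "stopping_time F T"
    and h: "0 < h" "0 \<le> Lf" "12 * Lf * h \<le> 1" and \<rho>: "16 * Lf < \<rho>"
    and exp_T: "integrable M (\<lambda>\<omega>. exp (\<rho> * T \<omega>))"
    and p: "4 \<le> p"
    and R: "\<forall>t\<in>grid h. R t \<in> borel_measurable (F t) \<and> integrable M (\<lambda>\<omega>. \<bar>R t \<omega>\<bar> powr p)"
    and bdd: "bdd_above ((\<lambda>t. Lp_norm M p (\<lambda>\<omega>. indicator {\<omega>. t \<le> T \<omega>} \<omega> * R t \<omega>)) ` grid h)"
  shows "in_V M F h T (\<lambda>t \<omega>. indicator {\<omega>. t \<le> T \<omega>} \<omega> * R t \<omega>)
    \<and> V_norm M Lf h T (\<lambda>t \<omega>. indicator {\<omega>. t \<le> T \<omega>} \<omega> * R t \<omega>) < \<infinity>"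
proof
  have [measurable]: "T \<in> borel_measurable M"
    using F(2) by (intro measurable_stopping_time[OF T]) (auto simp: subalgebra_def)
  have R_M: "R t \<in> borel_measurable M" if "t \<in> grid h" for t
    using R that measurable_from_subalg[OF F(2)] by blast
  have grid: "real n * h \<in> grid h" for n
    by (auto simp: grid_def)
  have "0 \<le> \<rho>"
    using h \<rho> by simp
  show "in_V M F h T (\<lambda>t \<omega>. indicator {\<omega>. t \<le> T \<omega>} \<omega> * R t \<omega>)"
  proof (rule in_V_truncation)
    show "Measurable.pred (F t) (\<lambda>\<omega>. t \<le> T \<omega>)" for t
      using F(1) T by (rule filtration.pred_le_stopping_time)
    show "integrable M (\<lambda>\<omega>. (indicator {\<omega>. t \<le> T \<omega>} \<omega> * R t \<omega>)\<^sup>2)" if "t \<in> grid h" for t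
      using that R R_M[OF that] h exp_T
      by (intro integrable_truncated_square[OF p \<open>0 \<le> \<rho>\<close>]) (auto simp: grid_def)
  qed (use R in blast)
  show "V_norm M Lf h T (\<lambda>t \<omega>. indicator {\<omega>. t \<le> T \<omega>} \<omega> * R t \<omega>) < \<infinity>"
    using R R_M grid by (intro V_norm_truncation_finite[OF p h \<rho> _ _ exp_T _ bdd]) auto
qed

lemma V_norm_finite_weighted_square_tendsto_zero:
  fixes S :: "real \<Rightarrow> 'a \<Rightarrow> real" and T :: "'a \<Rightarrow> real"
  assumes h: "0 < h" "0 \<le> Lf" "3 * Lf * h < 1"
    and sub: "\<And>t. subalgebra M (F t)" and [measurable]: "T \<in> borel_measurable M"
    and S: "in_V M F h T S" and V: "V_norm M Lf h T S < \<infinity>"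
  shows "(\<forall>n::nat. integrable M (\<lambda>\<omega>. (1 / (1 - 3 * Lf * h)) powr (real n * h / h)
                      * indicator {\<omega>. real n * h \<le> T \<omega>} \<omega> * (S (real n * h) \<omega>)\<^sup>2))
        \<and> (\<lambda>n::nat. \<integral>\<omega>. \<bar>(1 / (1 - 3 * Lf * h)) powr (real n * h / h)
                      * indicator {\<omega>. real n * h \<le> T \<omega>} \<omega> * (S (real n * h) \<omega>)\<^sup>2\<bar> \<partial>M)
            \<longlonglongrightarrow> 0"
proof -
  define c where "c = 1 / (1 - 3 * Lf * h)"
  define Y where "Y n \<omega> = indicator {\<omega>. real n * h \<le> T \<omega>} \<omega> * S (real n * h) \<omega>" for n \<omega>
  define I where "I n = (\<integral>\<omega>. (Y n \<omega>)\<^sup>2 \<partial>M)" for n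
  have "1 \<le> c"
    unfolding c_def using h by simp
  have grid: "real n * h \<in> grid h" for n
    by (auto simp: grid_def)
  have [measurable]: "S (real n * h) \<in> borel_measurable M" for n
    using S grid measurable_from_subalg[OF sub] unfolding in_V_def by blast
  have S2: "integrable M (\<lambda>\<omega>. (S (real n * h) \<omega>)\<^sup>2)" for n
    using S grid unfolding in_V_def by blast
  have [measurable]: "Y n \<in> borel_measurable M" for n
    unfolding Y_def by measurable
  have Y2: "integrable M (\<lambda>\<omega>. (Y n \<omega>)\<^sup>2)" for n
    by (rule Bochner_Integration.integrable_bound[OF S2]) (auto simp: Y_def indicator_def)
  have weight: "c powr (real n * h / h) * indicator {\<omega>. real n * h \<le> T \<omega>} \<omega> * (S (real n * h) \<omega>)\<^sup>2
      = c ^ n * (Y n \<omega>)\<^sup>2" for n \<omega>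
    using h \<open>1 \<le> c\<close> by (simp add: Y_def powr_realpow indicator_def)
  have "V_norm M Lf h T S = (\<Sum>n. ennreal (c ^ n * sqrt (I n)))"
    using h by (simp add: V_norm_eq_suminf c_def I_def Y_def)
  then have "summable (\<lambda>n. c ^ n * sqrt (I n))"
    using V \<open>1 \<le> c\<close> by (intro summable_suminf_not_top) (auto simp: I_def)
  then have "(\<lambda>n. c ^ n * I n) \<longlonglongrightarrow> 0"
    using \<open>1 \<le> c\<close> by (intro weighted_tendsto_zero_if_summable_sqrt) (simp_all add: I_def)
  moreover have "(\<integral>\<omega>. \<bar>c ^ n * (Y n \<omega>)\<^sup>2\<bar> \<partial>M) = c ^ n * I n" for n
    using \<open>1 \<le> c\<close> by (simp add: I_def)
  ultimately show ?thesis
    using Y2 unfolding c_def[symmetric] weight by simp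
qed

theorem mainTheorem12:
  fixes M :: "'a measure" and W :: "real \<Rightarrow> 'a \<Rightarrow> real ^ 'd::finite"
    and F :: "real \<Rightarrow> 'a measure"
    and \<tau> :: "'a \<Rightarrow> real" and tauh :: "real \<Rightarrow> 'a \<Rightarrow> real"
    and Lf h0 \<rho> h :: real
  assumes BM: "brownian_motion M W"
    and F_def: "F = brownian_filtration M W"
    and tau_st: "stopping_time F \<tau>" and tau_nonneg: "\<forall>\<omega>\<in>space M. 0 \<le> \<tau> \<omega>"
    and tauh_st: "\<forall>h'\<in>{0<..h0}. stopping_time F (tauh h') \<and> (\<forall>\<omega>\<in>space M. tauh h' \<omega> \<in> grid h')"
    and Lf_pos: "Lf > 0"
    and h0: "0 < h0" "h0 < min Lf (1 / (12 * Lf))"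
    and h: "h \<in> {0<..h0}"
    and rho: "\<rho> > 4 * 4 * Lf"
    and int_tau: "integrable M (\<lambda>\<omega>. exp (\<rho> * \<tau> \<omega>))"
    and sup_meas: "(\<lambda>\<omega>. SUP h'\<in>{0<..h0}. ennreal (exp (\<rho> * tauh h' \<omega>))) \<in> borel_measurable M"
    and sup_int: "(\<integral>\<^sup>+\<omega>. (SUP h'\<in>{0<..h0}. ennreal (exp (\<rho> * tauh h' \<omega>))) \<partial>M) < \<infinity>"
  shows
    "(\<forall>(p::real) (R :: real \<Rightarrow> 'a \<Rightarrow> real).
        p \<ge> 4
      \<longrightarrow> (\<forall>t\<in>grid h. R t \<in> borel_measurable (F t) \<and> integrable M (\<lambda>\<omega>. \<bar>R t \<omega>\<bar> powr p))
      \<longrightarrow> bdd_above ((\<lambda>t. Lp_norm M p (\<lambda>\<omega>. indicator {\<omega>. t \<le> tauh h \<omega>} \<omega> * R t \<omega>)) ` grid h)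
      \<longrightarrow> in_V M F h (tauh h) (\<lambda>t \<omega>. indicator {\<omega>. t \<le> tauh h \<omega>} \<omega> * R t \<omega>)
        \<and> V_norm M Lf h (tauh h) (\<lambda>t \<omega>. indicator {\<omega>. t \<le> tauh h \<omega>} \<omega> * R t \<omega>) < \<infinity>)
   \<and> (\<forall>S :: real \<Rightarrow> 'a \<Rightarrow> real.
        in_V M F h (tauh h) S \<and> V_norm M Lf h (tauh h) S < \<infinity>
      \<longrightarrow> (\<forall>n::nat. integrable M (\<lambda>\<omega>. (1 / (1 - 3 * Lf * h)) powr (real n * h / h)
                      * indicator {\<omega>. real n * h \<le> tauh h \<omega>} \<omega> * (S (real n * h) \<omega>)\<^sup>2))
        \<and> (\<lambda>n::nat. \<integral>\<omega>. \<bar>(1 / (1 - 3 * Lf * h)) powr (real n * h / h)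
                      * indicator {\<omega>. real n * h \<le> tauh h \<omega>} \<omega> * (S (real n * h) \<omega>)\<^sup>2\<bar> \<partial>M)
            \<longlonglongrightarrow> 0)"
proof -
  \<comment> \<open>Only the exponential moment of \<open>tauh h\<close> enters.\<close>
  have hL: "0 < h" "0 \<le> Lf" "12 * Lf * h \<le> 1"
  proof -
    have "Lf * h \<le> Lf * h0"
      using h Lf_pos by simp
    also have "\<dots> < Lf * (1 / (12 * Lf))"
      using h0 Lf_pos by (intro mult_strict_left_mono) auto
    finally show "0 < h" "0 \<le> Lf" "12 * Lf * h \<le> 1"
      using h Lf_pos by auto
  qed
  have W: "\<And>s. 0 \<le> s \<Longrightarrow> W s \<in> borel_measurable M"
    using BM unfolding brownian_motion_def by blast
  have F: "filtration (space M) F" "\<And>t. subalgebra M (F t)"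
    unfolding F_def by (intro filtration_brownian_filtration subalgebra_brownian_filtration W)+
  have T: "stopping_time F (tauh h)"
    using tauh_st h by blast
  have T_M[measurable]: "tauh h \<in> borel_measurable M"
    using F(2) by (intro measurable_stopping_time[OF T]) (auto simp: subalgebra_def)
  have exp_T: "integrable M (\<lambda>\<omega>. exp (\<rho> * tauh h \<omega>))"
    using h sup_int by (intro integrable_of_nn_integral_SUP_finite[where I="{0<..h0}"]) simp_all
  have "16 * Lf < \<rho>" "3 * Lf * h < 1"
    using rho hL by simp_all
  note part_i = truncation_in_V_and_V_norm_finite[OF F T hL \<open>16 * Lf < \<rho>\<close> exp_T]
  note part_ii = V_norm_finite_weighted_square_tendsto_zero[where F = F, OF hL(1,2) \<open>3 * Lf * h < 1\<close> F(2) T_M]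
  show ?thesis
    by (rule conjI; intro allI impI; (elim conjE)?; rule part_i part_ii; assumption)
qed

end
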